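(* Let $n$ be an even positive integer. The deterministic query complexity of the partial function $\mathrm{1v2Cycle}$ on $n$ vertices satisfies $D(\mathrm{1v2Cycle})\ge\frac{n^2}{512}$.
   Context: Undirected graphs on vertex set $\{1,\dots,n\}$ are encoded as strings in $\{0,1\}^N$ with $N=\binom n2$, one bit per unordered pair indicating presence of the edge. The partial function $\mathrm{1v2Cycle}:\Delta\to\{0,1\}$ is defined on the set $\Delta$ of graphs that are either a single cycle of length $n$ or a disjoint union of two cycles each of length $n/2$; it equals $1$ on the former and $0$ on the latter. For a partial function $g:\Delta\to\{0,1\}$, $D(g)=\min\{D(f): f:\{0,1\}^N\to\{0,1\},\ f|_\Delta=g\}$, where $D(f)$ for total $f$ is the minimum depth of a deterministic decision tree computing $f$. *)

theory Defs
  imports Complex_Main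
begin

datatype 'v dtree = Leaf bool | Node 'v "'v dtree" "'v dtree"

fun dt_eval :: "'v dtree \<Rightarrow> ('v \<Rightarrow> bool) \<Rightarrow> bool" where
  "dt_eval (Leaf b) x = b"
| "dt_eval (Node v t0 t1) x = (if x v then dt_eval t1 x else dt_eval t0 x)"

fun dt_depth :: "'v dtree \<Rightarrow> nat" where
  "dt_depth (Leaf b) = 0"
| "dt_depth (Node v t0 t1) = Suc (max (dt_depth t0) (dt_depth t1))"

fun dt_vars :: "'v dtree \<Rightarrow> 'v set" where
  "dt_vars (Leaf b) = {}"
| "dt_vars (Node v t0 t1) = insert v (dt_vars t0 \<union> dt_vars t1)"

text \<open>The N = n choose 2 bit positions: unordered pairs {i,j}, represented as (i,j) with i<j.\<close>
definition Pairs :: "nat \<Rightarrow> (nat \<times> nat) set" where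
  "Pairs n = {(i, j). 1 \<le> i \<and> i < j \<and> j \<le> n}"

text \<open>Strings in {0,1}^N: bit assignments to the pairs (canonically False outside Pairs n).\<close>
definition Inputs :: "nat \<Rightarrow> (nat \<times> nat \<Rightarrow> bool) set" where
  "Inputs n = {x. \<forall>p. p \<notin> Pairs n \<longrightarrow> \<not> x p}"

definition graph_edges :: "nat \<Rightarrow> (nat \<times> nat \<Rightarrow> bool) \<Rightarrow> nat set set" where
  "graph_edges n x = {{i, j} | i j. (i, j) \<in> Pairs n \<and> x (i, j)}"

definition computes :: "nat \<Rightarrow> (nat \<times> nat) dtree \<Rightarrow> ((nat \<times> nat \<Rightarrow> bool) \<Rightarrow> bool) \<Rightarrow> bool" where
  "computes n T f \<longleftrightarrow> dt_vars T \<subseteq> Pairs n \<and> (\<forall>x \<in> Inputs n. dt_eval T x = f x)"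

definition D_total :: "nat \<Rightarrow> ((nat \<times> nat \<Rightarrow> bool) \<Rightarrow> bool) \<Rightarrow> nat" where
  "D_total n f = (LEAST d. \<exists>T. computes n T f \<and> dt_depth T = d)"

definition D_partial :: "nat \<Rightarrow> (nat \<times> nat \<Rightarrow> bool) set \<Rightarrow> ((nat \<times> nat \<Rightarrow> bool) \<Rightarrow> bool) \<Rightarrow> nat" where
  "D_partial n Delta g = (LEAST d. \<exists>f. (\<forall>x \<in> Delta. f x = g x) \<and> D_total n f = d)"

definition cycle_edges :: "nat list \<Rightarrow> nat set set" where
  "cycle_edges vs = {{vs ! i, vs ! ((i + 1) mod length vs)} | i. i < length vs}"

definition one_cycle :: "nat \<Rightarrow> (nat \<times> nat \<Rightarrow> bool) \<Rightarrow> bool" where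
  "one_cycle n x \<longleftrightarrow> (\<exists>vs. distinct vs \<and> length vs = n \<and> n \<ge> 3 \<and> set vs = {1..n}
      \<and> graph_edges n x = cycle_edges vs)"

definition two_cycles :: "nat \<Rightarrow> (nat \<times> nat \<Rightarrow> bool) \<Rightarrow> bool" where
  "two_cycles n x \<longleftrightarrow> (\<exists>vs ws. distinct (vs @ ws) \<and> length vs = n div 2 \<and> length ws = n div 2
      \<and> n div 2 \<ge> 3 \<and> set (vs @ ws) = {1..n}
      \<and> graph_edges n x = cycle_edges vs \<union> cycle_edges ws)"

definition Delta_1v2 :: "nat \<Rightarrow> (nat \<times> nat \<Rightarrow> bool) set" where
  "Delta_1v2 n = {x \<in> Inputs n. one_cycle n x \<or> two_cycles n x}"

definition one_v_two_cycle :: "nat \<Rightarrow> (nat \<times> nat \<Rightarrow> bool) \<Rightarrow> bool" where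
  "one_v_two_cycle n x = one_cycle n x"

end

(* Adversary argument. The adversary answers queries so that some Hamiltonian cycle L stays
   consistent with all answers: a queried pair is reported present only if it was committed
   before, and otherwise absent, after which L is rerouted around the absent pairs by 2-opt
   moves. A vertex with more than t = n/16 absent pairs to open vertices is closed by
   committing its two cycle edges; each closing consumes t+1 absent answers, so after fewer than
   n^2/512 queries at most n/32 vertices are closed and at most n/16 edges are committed. Then,
   besides L, two cycles of length n/2 (obtained by cutting L into halves between committed
   edges and rerouting each half) are still consistent, so no shallow tree separates the
   one-cycle inputs from the two-cycle inputs. *)

theory Submission
  imports Defs
begin

section \<open>Cycles as vertex lists\<close>

lemma Suc_mod_if:
  assumes "k < n"
  shows "Suc k mod n = (if Suc k < n then Suc k else 0)"
proof (cases "Suc k < n")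
  case False
  then have "Suc k = n" using \<open>k < n\<close> by simp
  then show ?thesis by simp
qed simp

fun path_edges :: "'a list \<Rightarrow> 'a set set" where
  "path_edges (x # y # zs) = insert {x, y} (path_edges (y # zs))"
| "path_edges _ = {}"

lemma path_edges_append:
  "A \<noteq> [] \<Longrightarrow> B \<noteq> [] \<Longrightarrow> path_edges (A @ B) = path_edges A \<union> path_edges B \<union> {{last A, hd B}}"
proof (induction A rule: path_edges.induct)
  case ("2_2" v)
  then show ?case by (cases B) auto
qed auto

lemma path_edges_rev: "path_edges (rev A) = path_edges A"
proof (induction A rule: path_edges.induct)
  case (1 x y zs)
  then show ?case
    using path_edges_append[of "rev zs @ [y]" "[x]"] by (auto simp: last_rev)
qed auto

lemma path_edges_subset_set: "e \<in> path_edges A \<Longrightarrow> e \<subseteq> set A"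
  by (induction A rule: path_edges.induct) auto

lemma path_edges_conv_nth: "path_edges L = (\<lambda>i. {L ! i, L ! Suc i}) ` {..<length L - 1}"
proof (induction L rule: path_edges.induct)
  case (1 x y zs)
  then show ?case
    by (simp add: lessThan_Suc_eq_insert_0 image_image)
qed auto

definition cycle_edge :: "'a list \<Rightarrow> nat \<Rightarrow> 'a set" where
  "cycle_edge L i = {L ! (i mod length L), L ! (Suc i mod length L)}"

lemma cycle_edge_mod: "cycle_edge L (i mod length L) = cycle_edge L i"
  by (simp add: cycle_edge_def mod_Suc_eq)

lemma cycle_edge_add_length: "cycle_edge L (m + length L) = cycle_edge L m"
  by (metis add_Suc cycle_edge_def mod_add_self2)

lemma cycle_edges_eq_image: "cycle_edges L = cycle_edge L ` {..<length L}"
proof (intro set_eqI iffI)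
  fix e assume "e \<in> cycle_edges L"
  then obtain i where "i < length L" "e = {L ! i, L ! ((i + 1) mod length L)}"
    unfolding cycle_edges_def by blast
  then show "e \<in> cycle_edge L ` {..<length L}"
    by (intro image_eqI[of _ _ i]) (simp_all add: cycle_edge_def)
next
  fix e assume "e \<in> cycle_edge L ` {..<length L}"
  then obtain i where "i < length L" "e = cycle_edge L i"
    by blast
  then show "e \<in> cycle_edges L"
    unfolding cycle_edges_def cycle_edge_def by auto
qed

lemma cycle_edge_in_cycle_edges: "L \<noteq> [] \<Longrightarrow> cycle_edge L i \<in> cycle_edges L"
  by (metis cycle_edge_mod cycle_edges_eq_image image_eqI length_greater_0_conv lessThan_iff
      mod_less_divisor)

lemma finite_cycle_edges: "finite (cycle_edges L)"
  by (simp add: cycle_edges_eq_image)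

lemma cycle_edge_subset_set: "L \<noteq> [] \<Longrightarrow> cycle_edge L i \<subseteq> set L"
  by (simp add: cycle_edge_def)

lemma cycle_edges_subset_set:
  assumes "e \<in> cycle_edges L"
  shows "e \<subseteq> set L"
proof -
  obtain i where "i < length L" "e = cycle_edge L i"
    using assms by (auto simp: cycle_edges_eq_image)
  moreover have "L \<noteq> []"
    using \<open>i < length L\<close> by (cases L) simp_all
  ultimately show ?thesis
    using cycle_edge_subset_set by blast
qed

lemma cycle_edge_doubleton:
  assumes "distinct L" "2 \<le> length L"
  obtains a b where "cycle_edge L i = {a, b}" "a \<noteq> b" "a \<in> set L" "b \<in> set L"
proof -
  let ?n = "length L"
  have "0 < ?n"
    using assms(2) by linarith
  then have bounds: "i mod ?n < ?n" "Suc i mod ?n < ?n"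
    by simp_all
  have "i mod ?n \<noteq> Suc i mod ?n"
    using assms(2) by (simp add: mod_Suc)
  then have "L ! (i mod ?n) \<noteq> L ! (Suc i mod ?n)"
    using bounds by (simp add: nth_eq_iff_index_eq[OF assms(1)])
  with bounds show ?thesis
    using that[of "L ! (i mod ?n)" "L ! (Suc i mod ?n)"] by (simp add: cycle_edge_def)
qed

lemma inj_on_cycle_edge:
  assumes "distinct L" "3 \<le> length L"
  shows "inj_on (cycle_edge L) {..<length L}"
proof (rule inj_onI)
  fix i j assume "i \<in> {..<length L}" "j \<in> {..<length L}" and eq: "cycle_edge L i = cycle_edge L j"
  let ?n = "length L"
  have "0 < ?n"
    using assms(2) by linarith
  then have ij: "i < ?n" "j < ?n" "Suc i mod ?n < ?n" "Suc j mod ?n < ?n"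
    using \<open>i \<in> _\<close> \<open>j \<in> _\<close> by simp_all
  have "{L ! i, L ! (Suc i mod ?n)} = {L ! j, L ! (Suc j mod ?n)}"
    using eq ij by (simp add: cycle_edge_def)
  then have "i = j \<or> (i = Suc j mod ?n \<and> Suc i mod ?n = j)"
    using ij by (auto simp: doubleton_eq_iff nth_eq_iff_index_eq[OF assms(1)])
  then show "i = j"
    using ij assms(2) by (auto simp: Suc_mod_if[OF ij(1)] Suc_mod_if[OF ij(2)] split: if_splits)
qed

lemma cycle_edge_pred: "i < length L \<Longrightarrow> cycle_edge L (Suc i mod length L + length L - 1) = cycle_edge L i"
proof (cases "Suc i < length L")
  case True
  then show ?thesis
    using cycle_edge_add_length[of L i] by simp
next
  case False
  assume "i < length L"
  with False have "Suc i = length L"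
    by linarith
  then show ?thesis
    by (metis diff_Suc_1 mod_self plus_nat.add_0)
qed

lemma incident_cycle_edges_subset:
  assumes "distinct L" "p < length L"
  shows "{e \<in> cycle_edges L. L ! p \<in> e} \<subseteq> {cycle_edge L p, cycle_edge L (p + length L - 1)}"
proof
  let ?n = "length L"
  fix e assume e: "e \<in> {e \<in> cycle_edges L. L ! p \<in> e}"
  then obtain i where i: "i < ?n" "e = cycle_edge L i"
    by (auto simp: cycle_edges_eq_image)
  then have "L ! p = L ! i \<or> L ! p = L ! (Suc i mod ?n)"
    using e by (simp add: cycle_edge_def)
  moreover have "Suc i mod ?n < ?n"
    using assms(2) by (metis mod_less_divisor gr_implies_not0 neq0_conv)
  ultimately have "i = p \<or> Suc i mod ?n = p"
    using i(1) assms by (auto simp: nth_eq_iff_index_eq)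
  then show "e \<in> {cycle_edge L p, cycle_edge L (p + ?n - 1)}"
    using i cycle_edge_pred[OF i(1)] by auto
qed

lemma card_incident_cycle_edges:
  assumes "distinct L"
  shows "card {e \<in> cycle_edges L. x \<in> e} \<le> 2"
proof (cases "x \<in> set L")
  case False
  then have "{e \<in> cycle_edges L. x \<in> e} = {}"
    using cycle_edges_subset_set by blast
  then show ?thesis
    by (metis card.empty zero_le)
next
  case True
  then obtain p where p: "p < length L" "L ! p = x"
    by (auto simp: in_set_conv_nth)
  then have "card {e \<in> cycle_edges L. x \<in> e} \<le> card {cycle_edge L p, cycle_edge L (p + length L - 1)}"
    using incident_cycle_edges_subset[OF assms p(1)] by (simp add: card_mono)
  also have "\<dots> \<le> 2"
    by (simp add: card_insert_le_m1)
  finally show ?thesis .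
qed

lemma cycle_edges_conv_path_edges:
  assumes "L \<noteq> []"
  shows "cycle_edges L = insert {last L, hd L} (path_edges L)"
proof -
  have "{..<length L} = insert (length L - 1) {..<length L - 1}"
    using assms by auto
  moreover have "cycle_edge L (length L - 1) = {last L, hd L}"
    using assms by (simp add: cycle_edge_def last_conv_nth hd_conv_nth)
  moreover have "cycle_edge L i = {L ! i, L ! Suc i}" if "i < length L - 1" for i
    using that by (simp add: cycle_edge_def)
  ultimately show ?thesis
    by (simp add: cycle_edges_eq_image path_edges_conv_nth)
qed

lemma cycle_edges_append:
  "A \<noteq> [] \<Longrightarrow> B \<noteq> [] \<Longrightarrow>
    cycle_edges (A @ B) = path_edges A \<union> path_edges B \<union> {{last A, hd B}, {last B, hd A}}"
  by (simp add: cycle_edges_conv_path_edges path_edges_append) auto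

lemma cycle_edges_rotate1: "cycle_edges (rotate1 L) = cycle_edges L"
proof (cases L)
  case (Cons x xs)
  then show ?thesis
  proof (cases xs)
    case Cons
    then show ?thesis
      using \<open>L = x # xs\<close> cycle_edges_append[of xs "[x]"]
      by (auto simp: cycle_edges_conv_path_edges)
  qed simp
qed simp

lemma cycle_edges_rotate: "cycle_edges (rotate m L) = cycle_edges L"
  by (induction m) (simp_all add: cycle_edges_rotate1)

lemma last_rotate_conv_nth:
  "L \<noteq> [] \<Longrightarrow> last (rotate i L) = L ! ((i + length L - 1) mod length L)"
proof -
  assume "L \<noteq> []"
  then have "last (rotate i L) = L ! ((i + (length L - 1)) mod length L)"
    by (simp add: last_conv_nth nth_rotate del: add_diff_assoc)
  also have "i + (length L - 1) = i + length L - 1"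
    using \<open>L \<noteq> []\<close> by (simp add: Suc_le_eq)
  finally show ?thesis .
qed

lemma closing_edge_rotate:
  "L \<noteq> [] \<Longrightarrow> {last (rotate i L), hd (rotate i L)} = cycle_edge L (i + length L - 1)"
  by (simp add: cycle_edge_def last_rotate_conv_nth hd_rotate_conv_nth)

lemma cycle_edge_eq_closing_edge:
  assumes "e \<in> cycle_edges L"
  obtains i where "e = {last (rotate i L), hd (rotate i L)}"
proof -
  obtain m where m: "m < length L" "e = cycle_edge L m"
    using assms by (auto simp: cycle_edges_eq_image)
  then have "L \<noteq> []"
    by (cases L) simp_all
  have "cycle_edge L (Suc m + length L - 1) = cycle_edge L m"
    using cycle_edge_add_length[of L m] by simp
  then have "e = {last (rotate (Suc m) L), hd (rotate (Suc m) L)}"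
    using closing_edge_rotate[OF \<open>L \<noteq> []\<close>, of "Suc m"] m(2) by (simp only:)
  then show ?thesis
    by (rule that)
qed

lemma rotate_split_cut_edges:
  assumes "0 < a" "a < length L"
  shows "{last (take a (rotate i L)), hd (drop a (rotate i L))} = cycle_edge L (i + a - 1)"
    and "{last (drop a (rotate i L)), hd (take a (rotate i L))} = cycle_edge L (i + length L - 1)"
proof -
  let ?R = "rotate i L" and ?n = "length L"
  have "take a ?R \<noteq> []" "L \<noteq> []"
    using assms by auto
  then have "last (take a ?R) = L ! ((i + (a - 1)) mod ?n)"
    using assms by (simp add: last_conv_nth nth_rotate del: add_diff_assoc)
  moreover have "hd (drop a ?R) = L ! ((i + a) mod ?n)"
    using assms by (simp add: hd_drop_conv_nth nth_rotate)
  moreover have "i + (a - 1) = i + a - 1" "Suc (i + a - 1) = i + a"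
    using assms by simp_all
  ultimately show "{last (take a ?R), hd (drop a ?R)} = cycle_edge L (i + a - 1)"
    by (simp add: cycle_edge_def del: add_diff_assoc)
  show "{last (drop a ?R), hd (take a ?R)} = cycle_edge L (i + ?n - 1)"
    using assms closing_edge_rotate[OF \<open>L \<noteq> []\<close>] by simp
qed

lemma cycle_edges_two_opt:
  assumes "Suc b < length R"
  shows "cycle_edges R = path_edges (take (Suc b) R) \<union> path_edges (drop (Suc b) R)
           \<union> {{R ! b, R ! Suc b}, {last R, hd R}}"
    and "cycle_edges (rev (take (Suc b) R) @ drop (Suc b) R) =
           path_edges (take (Suc b) R) \<union> path_edges (drop (Suc b) R)
           \<union> {{hd R, R ! Suc b}, {last R, R ! b}}"
proof -
  let ?A = "take (Suc b) R" and ?B = "drop (Suc b) R"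
  have ne: "?A \<noteq> []" "?B \<noteq> []"
    using assms by auto
  have ends: "last ?A = R ! b" "hd ?B = R ! Suc b" "last ?B = last R" "hd ?A = hd R"
    using assms by (simp add: take_Suc_conv_app_nth, simp add: hd_drop_conv_nth, simp_all)
  show "cycle_edges R = path_edges ?A \<union> path_edges ?B \<union> {{R ! b, R ! Suc b}, {last R, hd R}}"
    using cycle_edges_append[OF ne] ends by simp
  have "rev ?A \<noteq> []"
    using ne by simp
  then show "cycle_edges (rev ?A @ ?B) = path_edges ?A \<union> path_edges ?B
      \<union> {{hd R, R ! Suc b}, {last R, R ! b}}"
    using cycle_edges_append[OF _ ne(2)] ends ne(1) by (simp add: path_edges_rev last_rev hd_rev)
qed

lemma closing_edge_notin_path_edges:
  assumes "distinct R" "Suc b < length R"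
  shows "{last R, hd R} \<notin> path_edges (take (Suc b) R) \<union> path_edges (drop (Suc b) R)"
proof
  let ?A = "take (Suc b) R" and ?B = "drop (Suc b) R"
  assume "{last R, hd R} \<in> path_edges ?A \<union> path_edges ?B"
  then have "{last R, hd R} \<subseteq> set ?A \<or> {last R, hd R} \<subseteq> set ?B"
    using path_edges_subset_set by blast
  moreover have "?A \<noteq> []" "?B \<noteq> []"
    using assms(2) by auto
  then have "hd R \<in> set ?A" "last R \<in> set ?B"
    using hd_in_set[of ?A] last_in_set[of ?B] assms(2) by simp_all
  moreover have "set ?A \<inter> set ?B = {}"
    using assms(1) by (metis append_take_drop_id distinct_append)
  ultimately show False
    by blast
qed

lemma cycle_edges_neq_Un:
  assumes sets: "set vs = set P \<union> set Q" "set P \<inter> set Q = {}" and "P \<noteq> []" "Q \<noteq> []"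
  shows "cycle_edges vs \<noteq> cycle_edges P \<union> cycle_edges Q"
proof
  assume edges: "cycle_edges vs = cycle_edges P \<union> cycle_edges Q"
  let ?n = "length vs"
  obtain a b where "a \<in> set P" "b \<in> set Q"
    using \<open>P \<noteq> []\<close> \<open>Q \<noteq> []\<close> by (meson last_in_set)
  then obtain p r where p: "p < ?n" "vs ! p = a" and r: "r < ?n" "vs ! r = b"
    using sets(1) by (metis UnCI in_set_conv_nth)
  have "vs \<noteq> []"
    using p(1) by (cases vs) simp_all
  have step: "vs ! (Suc k mod ?n) \<in> set P" if "vs ! (k mod ?n) \<in> set P" for k
  proof -
    have "cycle_edge vs k \<in> cycle_edges P \<union> cycle_edges Q"
      using edges cycle_edge_in_cycle_edges[OF \<open>vs \<noteq> []\<close>] by blast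
    then have "cycle_edge vs k \<subseteq> set P \<or> cycle_edge vs k \<subseteq> set Q"
      using cycle_edges_subset_set by blast
    then show ?thesis
      using that sets(2) by (auto simp: cycle_edge_def)
  qed
  have "vs ! ((p + j) mod ?n) \<in> set P" for j
  proof (induction j)
    case 0
    then show ?case
      using p \<open>a \<in> set P\<close> by simp
  next
    case (Suc j)
    then show ?case
      using step[of "p + j"] by simp
  qed
  moreover have "(p + (r + ?n - p)) mod ?n = r"
    using p(1) r(1) by simp
  ultimately have "b \<in> set P"
    using r(2) by metis
  then show False
    using \<open>b \<in> set Q\<close> sets(2) by blast
qed

section \<open>Rerouting a cycle around forbidden edges\<close>

definition incident_edges_in :: "nat set \<Rightarrow> nat set set \<Rightarrow> nat list \<Rightarrow> bool" where
  "incident_edges_in C F L \<longleftrightarrow> (\<forall>e \<in> cycle_edges L. e \<inter> C \<noteq> {} \<longrightarrow> e \<in> F)"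

lemma incident_edges_in_rotate: "incident_edges_in C F (rotate i L) = incident_edges_in C F L"
  by (simp add: incident_edges_in_def cycle_edges_rotate)

lemma incident_edges_inD: "incident_edges_in C F L \<Longrightarrow> e \<in> cycle_edges L \<Longrightarrow> e \<notin> F \<Longrightarrow> e \<inter> C = {}"
  by (auto simp: incident_edges_in_def)

definition neighbours :: "'a set set \<Rightarrow> 'a \<Rightarrow> 'a set" where
  "neighbours Z x = {v. {x, v} \<in> Z}"

lemma finite_neighbours: "finite Z \<Longrightarrow> finite (neighbours Z x)"
  by (rule finite_imageD[of "\<lambda>v. {x, v}"]) (auto simp: neighbours_def inj_on_def doubleton_eq_iff
      elim: finite_subset[rotated])

lemma card_neighbours_le:
  assumes "finite C"
  shows "card (neighbours Z x) \<le> card (neighbours Z x - C) + card C"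
  using diff_card_le_card_Diff[OF assms, of "neighbours Z x"] by linarith

lemma neighbours_insert:
  "neighbours (insert {i, j} Z) x = neighbours Z x \<union> (if x = i then {j} else {}) \<union> (if x = j then {i} else {})"
  by (auto simp: neighbours_def doubleton_eq_iff)

lemma card_touching_insert:
  assumes "finite Z" "x \<notin> C"
  shows "card {e \<in> Z. e \<inter> C \<noteq> {}} + card (neighbours Z x - C) \<le> card {e \<in> Z. e \<inter> insert x C \<noteq> {}}"
proof -
  let ?new = "(\<lambda>v. {x, v}) ` (neighbours Z x - C)"
  have "card ?new = card (neighbours Z x - C)"
    by (rule card_image) (auto simp: inj_on_def doubleton_eq_iff)
  moreover have "{e \<in> Z. e \<inter> C \<noteq> {}} \<inter> ?new = {}"
    using assms(2) by auto
  moreover have "finite ?new"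
    using finite_neighbours[OF assms(1)] by simp
  ultimately have "card ({e \<in> Z. e \<inter> C \<noteq> {}} \<union> ?new) = card {e \<in> Z. e \<inter> C \<noteq> {}} + card (neighbours Z x - C)"
    using assms(1) by (simp add: card_Un_disjoint)
  moreover have "{e \<in> Z. e \<inter> C \<noteq> {}} \<union> ?new \<subseteq> {e \<in> Z. e \<inter> insert x C \<noteq> {}}"
    by (auto simp: neighbours_def)
  ultimately show ?thesis
    using assms(1) by (metis (no_types, lifting) card_mono finite_subset mem_Collect_eq subsetI)
qed

lemma two_opt_index_exists:
  assumes dist: "distinct R" and len: "3 \<le> length R" and fin: "finite F" "finite Z"
    and deg: "card (neighbours Z (hd R)) \<le> D" "card (neighbours Z (last R)) \<le> D"
    and big: "card F + 2 * D + 1 < length R"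
  obtains b where "Suc b < length R" "{R ! b, R ! Suc b} \<notin> F"
    "R ! Suc b \<notin> neighbours Z (hd R)" "R ! b \<notin> neighbours Z (last R)"
proof -
  let ?n = "length R"
  define B1 where "B1 = {b. Suc b < ?n \<and> {R ! b, R ! Suc b} \<in> F}"
  define B2 where "B2 = {b. Suc b < ?n \<and> R ! Suc b \<in> neighbours Z (hd R)}"
  define B3 where "B3 = {b. Suc b < ?n \<and> R ! b \<in> neighbours Z (last R)}"
  have "inj_on (cycle_edge R) {b. Suc b < ?n}"
    using inj_on_cycle_edge[OF dist len] by (rule inj_on_subset) auto
  moreover have "inj_on (cycle_edge R) {b. Suc b < ?n} = inj_on (\<lambda>b. {R ! b, R ! Suc b}) {b. Suc b < ?n}"
    by (rule inj_on_cong) (simp add: cycle_edge_def)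
  ultimately have "inj_on (\<lambda>b. {R ! b, R ! Suc b}) {b. Suc b < ?n}"
    by simp
  then have "card B1 \<le> card F"
    unfolding B1_def by (rule card_inj_on_le[OF inj_on_subset]) (auto simp: fin)
  moreover have "card B2 \<le> card (neighbours Z (hd R))"
    unfolding B2_def using finite_neighbours[OF fin(2)]
    by (intro card_inj_on_le[of "\<lambda>b. R ! Suc b"]) (auto simp: inj_on_def nth_eq_iff_index_eq[OF dist])
  moreover have "card B3 \<le> card (neighbours Z (last R))"
    unfolding B3_def using finite_neighbours[OF fin(2)]
    by (intro card_inj_on_le[of "\<lambda>b. R ! b"]) (auto simp: inj_on_def nth_eq_iff_index_eq[OF dist])
  ultimately have "card (B1 \<union> B2 \<union> B3) < card {..<?n - 1}"
    using deg big card_Un_le[of "B1 \<union> B2" B3] card_Un_le[of B1 B2] by simp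
  moreover have "finite (B1 \<union> B2 \<union> B3)"
    unfolding B1_def B2_def B3_def by (rule finite_subset[of _ "{..<?n}"]) auto
  ultimately have "\<not> {..<?n - 1} \<subseteq> B1 \<union> B2 \<union> B3"
    by (meson card_mono leD)
  then obtain b where b: "b < ?n - 1" "b \<notin> B1 \<union> B2 \<union> B3"
    by blast
  then have "Suc b < ?n"
    by linarith
  with b show ?thesis
    using that unfolding B1_def B2_def B3_def by blast
qed

lemma reroute_cycle_step:
  assumes dist: "distinct R" and len: "3 \<le> length R"
    and F: "F \<subseteq> cycle_edges R" "F \<inter> Z = {}" "incident_edges_in C F R" "finite F"
    and Z: "finite Z" and deg: "\<And>x. x \<notin> C \<Longrightarrow> card (neighbours Z x) \<le> D"
    and big: "card F + 2 * D + 1 < length R"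
    and closing: "{last R, hd R} \<in> Z"
  obtains N where "distinct N" "set N = set R" "F \<subseteq> cycle_edges N" "incident_edges_in C F N"
    "Z \<inter> cycle_edges N \<subset> Z \<inter> cycle_edges R"
proof -
  have "R \<noteq> []"
    using len by auto
  then have closing_R: "{last R, hd R} \<in> cycle_edges R"
    by (simp add: cycle_edges_conv_path_edges)
  then have ends_free: "hd R \<notin> C" "last R \<notin> C"
    using incident_edges_inD[OF F(3)] closing F(2) by blast+
  obtain b where b: "Suc b < length R" "{R ! b, R ! Suc b} \<notin> F"
      "{hd R, R ! Suc b} \<notin> Z" "{last R, R ! b} \<notin> Z"
    using two_opt_index_exists[OF dist len F(4) Z deg[OF ends_free(1)] deg[OF ends_free(2)] big]
    by (auto simp: neighbours_def)
  let ?A = "take (Suc b) R" and ?B = "drop (Suc b) R"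
  define N where "N = rev ?A @ ?B"
  note old = cycle_edges_two_opt(1)[OF b(1)] and new = cycle_edges_two_opt(2)[OF b(1), folded N_def]
  have "distinct N" "set N = set R"
    unfolding N_def using dist by (metis append_take_drop_id distinct_append distinct_rev set_append set_rev)+
  moreover have "F \<subseteq> cycle_edges N"
    using F(1,2) old new b(2) closing by auto
  moreover have "{R ! b, R ! Suc b} \<inter> C = {}"
    using incident_edges_inD[OF F(3)] old b(2) by blast
  then have "incident_edges_in C F N"
    using F(3) old new ends_free unfolding incident_edges_in_def by auto
  moreover have "{last R, hd R} \<notin> path_edges ?A \<union> path_edges ?B"
    using closing_edge_notin_path_edges[OF dist b(1)] .
  then have "Z \<inter> cycle_edges N \<subset> Z \<inter> cycle_edges R"
    using old new b(3,4) closing by (auto simp: insert_commute)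
  ultimately show ?thesis
    by (rule that)
qed

lemma reroute_cycle:
  assumes "distinct L" "3 \<le> length L"
    and "F \<subseteq> cycle_edges L" "F \<inter> Z = {}" "incident_edges_in C F L" "finite F"
    and "finite Z" "\<And>x. x \<notin> C \<Longrightarrow> card (neighbours Z x) \<le> D"
    and "card F + 2 * D + 1 < length L"
  shows "\<exists>L'. distinct L' \<and> set L' = set L \<and> F \<subseteq> cycle_edges L' \<and> incident_edges_in C F L'
    \<and> Z \<inter> cycle_edges L' = {}"
  using assms
proof (induction "card (Z \<inter> cycle_edges L)" arbitrary: L rule: less_induct)
  case less
  show ?case
  proof (cases "Z \<inter> cycle_edges L = {}")
    case True
    then show ?thesis
      using less.prems by blast
  next
    case False
    then obtain e where "e \<in> Z" "e \<in> cycle_edges L"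
      by blast
    then obtain i where "{last (rotate i L), hd (rotate i L)} \<in> Z"
      by (metis cycle_edge_eq_closing_edge)
    then obtain N where N: "distinct N" "set N = set L" "F \<subseteq> cycle_edges N" "incident_edges_in C F N"
        "Z \<inter> cycle_edges N \<subset> Z \<inter> cycle_edges L"
      using reroute_cycle_step[of "rotate i L" F Z C D] less.prems
      by (auto simp: cycle_edges_rotate incident_edges_in_rotate)
    have "length N = length L"
      using N(1,2) less.prems(1) by (metis distinct_card)
    moreover have "card (Z \<inter> cycle_edges N) < card (Z \<inter> cycle_edges L)"
      using N(5) by (simp add: psubset_card_mono finite_cycle_edges)
    ultimately show ?thesis
      using less.hyps[of N] N less.prems by auto
  qed
qed

lemma halving_rotation_exists:
  assumes dist: "distinct L" and len: "length L = 2 * h" "2 \<le> h"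
    and F: "finite F" "2 * card F < h"
  obtains i where "{last (take h (rotate i L)), hd (drop h (rotate i L))} \<notin> F"
    "{last (drop h (rotate i L)), hd (take h (rotate i L))} \<notin> F"
proof -
  let ?n = "length L"
  have inj: "inj_on (cycle_edge L) {..<?n}"
    using inj_on_cycle_edge[OF dist] len by simp
  have shifts: "(\<lambda>i. i + h - 1) ` {1..h} \<subseteq> {..<?n}" "(\<lambda>i. i - 1) ` {1..h} \<subseteq> {..<?n}"
    using len by auto
  define B1 where "B1 = {i \<in> {1..h}. cycle_edge L (i + h - 1) \<in> F}"
  define B2 where "B2 = {i \<in> {1..h}. cycle_edge L (i - 1) \<in> F}"
  have "inj_on (cycle_edge L \<circ> (\<lambda>i. i + h - 1)) {1..h}"
    by (rule comp_inj_on[OF _ inj_on_subset[OF inj shifts(1)]]) (auto simp: inj_on_def)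
  then have "card B1 \<le> card F"
    unfolding B1_def by (intro card_inj_on_le[OF inj_on_subset]) (auto simp: F(1))
  moreover have "inj_on (cycle_edge L \<circ> (\<lambda>i. i - 1)) {1..h}"
    by (rule comp_inj_on[OF _ inj_on_subset[OF inj shifts(2)]]) (auto simp: inj_on_def)
  then have "card B2 \<le> card F"
    unfolding B2_def by (intro card_inj_on_le[OF inj_on_subset]) (auto simp: F(1))
  ultimately have "card (B1 \<union> B2) < card {1..h}"
    using F(2) card_Un_le[of B1 B2] by simp
  moreover have "finite (B1 \<union> B2)"
    unfolding B1_def B2_def by simp
  ultimately have "\<not> {1..h} \<subseteq> B1 \<union> B2"
    by (meson card_mono leD)
  then obtain i where i: "i \<in> {1..h}" "cycle_edge L (i + h - 1) \<notin> F" "cycle_edge L (i - 1) \<notin> F"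
    unfolding B1_def B2_def by blast
  have "cycle_edge L (i + ?n - 1) = cycle_edge L (i - 1)"
    using i(1) cycle_edge_add_length[of L "i - 1"] by (simp add: add.commute)
  then show ?thesis
    using that[of i] rotate_split_cut_edges[of h L i] len i by auto
qed

lemma split_cycle_halves:
  assumes dist: "distinct L" and len: "length L = 2 * h" "2 \<le> h"
    and F: "F \<subseteq> cycle_edges L" "incident_edges_in C F L" "finite F" "2 * card F < h"
  obtains P Q where "length P = h" "length Q = h" "distinct (P @ Q)" "set (P @ Q) = set L"
    "F \<subseteq> cycle_edges P \<union> cycle_edges Q" "incident_edges_in C F P" "incident_edges_in C F Q"
proof -
  obtain i where cuts: "{last (take h (rotate i L)), hd (drop h (rotate i L))} \<notin> F"
      "{last (drop h (rotate i L)), hd (take h (rotate i L))} \<notin> F"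
    using halving_rotation_exists[OF dist len F(3,4)] .
  define P where "P = take h (rotate i L)"
  define Q where "Q = drop h (rotate i L)"
  have ne: "P \<noteq> []" "Q \<noteq> []" and lens: "length P = h" "length Q = h"
    using len by (auto simp: P_def Q_def)
  have "cycle_edges L = cycle_edges (P @ Q)"
    by (simp add: P_def Q_def cycle_edges_rotate)
  also have "\<dots> = path_edges P \<union> path_edges Q \<union> {{last P, hd Q}, {last Q, hd P}}"
    by (rule cycle_edges_append[OF ne])
  finally have edges: "cycle_edges L = path_edges P \<union> path_edges Q \<union> {{last P, hd Q}, {last Q, hd P}}" .
  then have "{last P, hd Q} \<inter> C = {}" "{last Q, hd P} \<inter> C = {}"
    using incident_edges_inD[OF F(2)] cuts unfolding P_def Q_def by auto
  then have ends_free: "{last P, hd P} \<inter> C = {}" "{last Q, hd Q} \<inter> C = {}"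
    by auto
  have "P @ Q = rotate i L"
    by (simp add: P_def Q_def)
  then have "distinct (P @ Q)" "set (P @ Q) = set L"
    using dist by simp_all
  moreover have "F \<subseteq> cycle_edges P \<union> cycle_edges Q"
    using F(1) edges cuts ne unfolding P_def[symmetric] Q_def[symmetric]
    by (auto simp: cycle_edges_conv_path_edges)
  moreover have "incident_edges_in C F P" "incident_edges_in C F Q"
    using F(2) edges ends_free ne by (auto simp: incident_edges_in_def cycle_edges_conv_path_edges)
  ultimately show ?thesis
    using that lens by blast
qed

lemma split_cycle_avoiding:
  assumes L: "distinct L" "length L = 2 * h" "3 \<le> h"
    and E: "E \<subseteq> cycle_edges L" "Z \<inter> cycle_edges L = {}" "incident_edges_in C E L"
    and Z: "finite Z" "\<And>v. v \<notin> C \<Longrightarrow> card (neighbours Z v) \<le> D"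
    and small: "2 * card E < h" "card E + 2 * D + 1 < h"
  obtains P Q where "length P = h" "length Q = h" "distinct (P @ Q)" "set (P @ Q) = set L"
    "E \<subseteq> cycle_edges P \<union> cycle_edges Q" "Z \<inter> (cycle_edges P \<union> cycle_edges Q) = {}"
proof -
  have fin_E: "finite E"
    using E(1) finite_cycle_edges finite_subset by blast
  obtain P Q where PQ: "length P = h" "length Q = h" "distinct (P @ Q)" "set (P @ Q) = set L"
      "E \<subseteq> cycle_edges P \<union> cycle_edges Q" "incident_edges_in C E P" "incident_edges_in C E Q"
    using split_cycle_halves[OF L(1,2) _ E(1,3) fin_E small(1)] L(3) by auto
  have reroute_half: "\<exists>M'. distinct M' \<and> set M' = set M \<and> E \<inter> cycle_edges M \<subseteq> cycle_edges M'
      \<and> Z \<inter> cycle_edges M' = {}"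
    if M: "distinct M" "length M = h" "incident_edges_in C E M" for M
  proof -
    have "card (E \<inter> cycle_edges M) \<le> card E"
      using fin_E by (simp add: card_mono)
    then have "card (E \<inter> cycle_edges M) + 2 * D + 1 < length M"
      using M(2) small(2) by linarith
    moreover have "incident_edges_in C (E \<inter> cycle_edges M) M"
      using M(3) by (auto simp: incident_edges_in_def)
    moreover have "E \<inter> cycle_edges M \<inter> Z = {}"
      using E(1,2) by blast
    ultimately show ?thesis
      using reroute_cycle[OF M(1), of "E \<inter> cycle_edges M" Z C D] M(2) L(3) fin_E Z by auto
  qed
  obtain P' where P': "distinct P'" "set P' = set P" "E \<inter> cycle_edges P \<subseteq> cycle_edges P'"
      "Z \<inter> cycle_edges P' = {}"
    using reroute_half[of P] PQ by auto
  obtain Q' where Q': "distinct Q'" "set Q' = set Q" "E \<inter> cycle_edges Q \<subseteq> cycle_edges Q'"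
      "Z \<inter> cycle_edges Q' = {}"
    using reroute_half[of Q] PQ by auto
  have "length P' = h" "length Q' = h"
    using P'(1,2) Q'(1,2) PQ(1-3) by (metis distinct_append distinct_card)+
  moreover have "distinct (P' @ Q')" "set (P' @ Q') = set L"
    using P' Q' PQ(3,4) by auto
  moreover have "E \<subseteq> cycle_edges P' \<union> cycle_edges Q'" "Z \<inter> (cycle_edges P' \<union> cycle_edges Q') = {}"
    using PQ(5) P'(3,4) Q'(3,4) by blast+
  ultimately show ?thesis
    by (rule that)
qed

section \<open>Graphs as inputs\<close>

definition graph_input :: "nat \<Rightarrow> nat set set \<Rightarrow> nat \<times> nat \<Rightarrow> bool" where
  "graph_input n G = (\<lambda>p. p \<in> Pairs n \<and> {fst p, snd p} \<in> G)"

lemma graph_input_in_Inputs: "graph_input n G \<in> Inputs n"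
  by (simp add: graph_input_def Inputs_def)

lemma graph_edges_graph_input:
  assumes "\<And>e. e \<in> G \<Longrightarrow> \<exists>a b. e = {a, b} \<and> a \<noteq> b \<and> a \<in> {1..n} \<and> b \<in> {1..n}"
  shows "graph_edges n (graph_input n G) = G"
proof
  show "graph_edges n (graph_input n G) \<subseteq> G"
    by (auto simp: graph_edges_def graph_input_def)
next
  show "G \<subseteq> graph_edges n (graph_input n G)"
  proof
    fix e assume "e \<in> G"
    then obtain a b where ab: "e = {a, b}" "a \<noteq> b" "a \<in> {1..n}" "b \<in> {1..n}"
      using assms by blast
    then have "(min a b, max a b) \<in> Pairs n" "{min a b, max a b} = e"
      by (auto simp: Pairs_def min_def max_def)
    then show "e \<in> graph_edges n (graph_input n G)"
      using \<open>e \<in> G\<close> unfolding graph_edges_def graph_input_def by force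
  qed
qed

lemma graph_edges_graph_input_cycles:
  assumes "\<forall>L \<in> Ls. distinct L \<and> 2 \<le> length L \<and> set L \<subseteq> {1..n}"
  shows "graph_edges n (graph_input n (\<Union>L \<in> Ls. cycle_edges L)) = (\<Union>L \<in> Ls. cycle_edges L)"
proof (rule graph_edges_graph_input)
  fix e assume "e \<in> (\<Union>L \<in> Ls. cycle_edges L)"
  then obtain L i where "L \<in> Ls" "e = cycle_edge L i"
    by (auto simp: cycle_edges_eq_image)
  then show "\<exists>a b. e = {a, b} \<and> a \<noteq> b \<and> a \<in> {1..n} \<and> b \<in> {1..n}"
    using assms by (metis cycle_edge_doubleton subsetD)
qed

lemma one_cycle_graph_input:
  assumes "distinct L" "set L = {1..n}" "3 \<le> n"
  shows "one_cycle n (graph_input n (cycle_edges L))"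
proof -
  have "length L = n"
    using assms distinct_card by fastforce
  moreover have "graph_edges n (graph_input n (cycle_edges L)) = cycle_edges L"
    using graph_edges_graph_input_cycles[of "{L}" n] assms calculation by simp
  ultimately show ?thesis
    using assms unfolding one_cycle_def by blast
qed

lemma two_cycles_graph_input:
  assumes "distinct (P @ Q)" "length P = n div 2" "length Q = n div 2" "set (P @ Q) = {1..n}"
    "3 \<le> n div 2"
  shows "two_cycles n (graph_input n (cycle_edges P \<union> cycle_edges Q))"
proof -
  have "graph_edges n (graph_input n (cycle_edges P \<union> cycle_edges Q)) = cycle_edges P \<union> cycle_edges Q"
    using graph_edges_graph_input_cycles[of "{P, Q}" n] assms by auto
  then show ?thesis
    using assms unfolding two_cycles_def by blast
qed

lemma not_one_cycle_graph_input:
  assumes "distinct (P @ Q)" "P \<noteq> []" "Q \<noteq> []" "set (P @ Q) = {1..n}" "2 \<le> length P" "2 \<le> length Q"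
  shows "\<not> one_cycle n (graph_input n (cycle_edges P \<union> cycle_edges Q))"
proof
  assume "one_cycle n (graph_input n (cycle_edges P \<union> cycle_edges Q))"
  then obtain vs where "set vs = {1..n}"
      "graph_edges n (graph_input n (cycle_edges P \<union> cycle_edges Q)) = cycle_edges vs"
    unfolding one_cycle_def by blast
  moreover have "graph_edges n (graph_input n (cycle_edges P \<union> cycle_edges Q)) = cycle_edges P \<union> cycle_edges Q"
    using graph_edges_graph_input_cycles[of "{P, Q}" n] assms by auto
  ultimately show False
    using cycle_edges_neq_Un[of vs P Q] assms by auto
qed

section \<open>Decision trees against an adversary\<close>

fun query_all :: "'v list \<Rightarrow> (('v \<Rightarrow> bool) \<Rightarrow> bool) \<Rightarrow> ('v \<Rightarrow> bool) \<Rightarrow> 'v dtree" where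
  "query_all [] f a = Leaf (f a)"
| "query_all (v # vs) f a = Node v (query_all vs f (a(v := False))) (query_all vs f (a(v := True)))"

lemma dt_eval_query_all: "dt_eval (query_all vs f a) x = f (\<lambda>v. if v \<in> set vs then x v else a v)"
proof (induction vs arbitrary: a)
  case (Cons v vs)
  have "(\<lambda>u. if u \<in> set vs then x u else (a(v := x v)) u) = (\<lambda>u. if u \<in> set (v # vs) then x u else a u)"
    by auto
  then show ?case
    using Cons.IH[of "a(v := x v)"] by (cases "x v") (simp_all del: fun_upd_apply)
qed simp

lemma dt_vars_query_all: "dt_vars (query_all vs f a) \<subseteq> set vs"
  by (induction vs arbitrary: a) auto

lemma exists_computing_dtree: "\<exists>T. computes n T f"
proof -
  have "finite (Pairs n)"
    by (rule finite_subset[of _ "{1..n} \<times> {1..n}"]) (auto simp: Pairs_def)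
  then obtain ps where ps: "set ps = Pairs n"
    using finite_list by blast
  have "(\<lambda>p. if p \<in> set ps then x p else False) = x" if "x \<in> Inputs n" for x
  proof
    fix p
    show "(if p \<in> set ps then x p else False) = x p"
      using that ps by (cases p) (auto simp: Inputs_def)
  qed
  then have "computes n (query_all ps f (\<lambda>_. False)) f"
    using dt_vars_query_all[of ps f "\<lambda>_. False"] ps by (simp add: computes_def dt_eval_query_all)
  then show ?thesis ..
qed

lemma D_partial_lower_bound:
  assumes "\<And>T. dt_vars T \<subseteq> Pairs n \<Longrightarrow> dt_depth T \<le> K \<Longrightarrow>
      \<exists>x \<in> Delta. \<exists>y \<in> Delta. g x \<noteq> g y \<and> dt_eval T x = dt_eval T y"
    and "Delta \<subseteq> Inputs n"
  shows "K < D_partial n Delta g"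
proof (rule ccontr)
  assume "\<not> K < D_partial n Delta g"
  obtain f where f: "\<forall>x \<in> Delta. f x = g x" "D_total n f = D_partial n Delta g"
    using LeastI_ex[of "\<lambda>d. \<exists>f. (\<forall>x \<in> Delta. f x = g x) \<and> D_total n f = d"]
    unfolding D_partial_def by blast
  obtain T where T: "computes n T f" "dt_depth T = D_total n f"
    using LeastI_ex[of "\<lambda>d. \<exists>T. computes n T f \<and> dt_depth T = d"] exists_computing_dtree
    unfolding D_total_def by blast
  then obtain x y where "x \<in> Delta" "y \<in> Delta" "g x \<noteq> g y" "dt_eval T x = dt_eval T y"
    using assms(1)[of T] f(2) \<open>\<not> K < D_partial n Delta g\<close> by (auto simp: computes_def)
  then show False
    using T(1) f(1) assms(2) by (auto simp: computes_def)
qed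

lemma dt_eval_adversary:
  fixes S :: "'s \<Rightarrow> ('v \<Rightarrow> bool) set"
  assumes answer: "\<And>k s v. I k s \<Longrightarrow> k < K \<Longrightarrow> v \<in> V \<Longrightarrow>
      \<exists>b s'. I (Suc k) s' \<and> S s' \<subseteq> {x \<in> S s. x v = b}"
    and undecided: "\<And>k s. I k s \<Longrightarrow> k \<le> K \<Longrightarrow> \<exists>x \<in> S s. \<exists>y \<in> S s. R x y"
    and "I k s" "dt_vars T \<subseteq> V" "k + dt_depth T \<le> K"
  shows "\<exists>x \<in> S s. \<exists>y \<in> S s. R x y \<and> dt_eval T x = dt_eval T y"
  using assms(3-)
proof (induction T arbitrary: k s)
  case (Leaf b)
  then show ?case
    using undecided[OF Leaf.prems(1)] by simp
next
  case (Node v T0 T1)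
  let ?T = "\<lambda>b. if b then T1 else T0"
  have "k < K" "v \<in> V"
    using Node.prems(2,3) by simp_all
  then obtain b s' where s': "I (Suc k) s'" "S s' \<subseteq> {x \<in> S s. x v = b}"
    using answer[OF Node.prems(1)] by blast
  have "dt_vars (?T b) \<subseteq> V" "Suc k + dt_depth (?T b) \<le> K"
    using Node.prems(2,3) by auto
  then have "\<exists>x \<in> S s'. \<exists>y \<in> S s'. R x y \<and> dt_eval (?T b) x = dt_eval (?T b) y"
    using Node.IH[OF s'(1)] by (cases b) simp_all
  then obtain x y where xy: "x \<in> S s'" "y \<in> S s'" "R x y" "dt_eval (?T b) x = dt_eval (?T b) y"
    by blast
  then have "x v = b" "y v = b"
    using s'(2) by auto
  then have "dt_eval (Node v T0 T1) x = dt_eval (Node v T0 T1) y"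
    using xy(4) by (cases b) simp_all
  then show ?case
    using xy s'(2) by blast
qed

section \<open>The adversary for 1v2Cycle\<close>

definition consistent :: "nat \<Rightarrow> nat set set \<Rightarrow> nat set set \<Rightarrow> (nat \<times> nat \<Rightarrow> bool) set" where
  "consistent n E Z = {x \<in> Inputs n. \<forall>(i, j) \<in> Pairs n.
      ({i, j} \<in> E \<longrightarrow> x (i, j)) \<and> ({i, j} \<in> Z \<longrightarrow> \<not> x (i, j))}"

lemma graph_input_consistent: "E \<subseteq> G \<Longrightarrow> Z \<inter> G = {} \<Longrightarrow> graph_input n G \<in> consistent n E Z"
  by (auto simp: consistent_def graph_input_def Inputs_def)

(* E and Z are the pairs answered present and absent, L is a Hamiltonian cycle consistent with
   them, and C is the set of closed vertices, whose cycle edges are all committed to E. Every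
   open vertex has at most t absent pairs to open vertices, except those in X, which may have
   one more until they are examined for closing. *)
definition adversary_inv :: "nat \<Rightarrow> nat \<Rightarrow> nat \<Rightarrow> nat set \<Rightarrow> nat set set \<Rightarrow> nat set set \<Rightarrow> nat set
    \<Rightarrow> nat list \<Rightarrow> bool" where
  "adversary_inv n t k X E Z C L \<longleftrightarrow>
     distinct L \<and> set L = {1..n} \<and> E \<subseteq> cycle_edges L \<and> Z \<inter> cycle_edges L = {} \<and>
     incident_edges_in C E L \<and> finite Z \<and> card Z \<le> k \<and> finite C \<and>
     (t + 1) * card C \<le> card {e \<in> Z. e \<inter> C \<noteq> {}} \<and> card E \<le> 2 * card C \<and>
     (\<forall>x. x \<notin> C \<longrightarrow> card (neighbours Z x - C) \<le> (if x \<in> X then t + 1 else t))"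

lemma adversary_inv_card_closed:
  assumes "adversary_inv n t k X E Z C L"
  shows "(t + 1) * card C \<le> k"
proof -
  have "(t + 1) * card C \<le> card {e \<in> Z. e \<inter> C \<noteq> {}}" "card Z \<le> k" "finite Z"
    using assms by (simp_all add: adversary_inv_def)
  moreover have "card {e \<in> Z. e \<inter> C \<noteq> {}} \<le> card Z"
    using \<open>finite Z\<close> by (intro card_mono) auto
  ultimately show ?thesis
    by linarith
qed

lemma adversary_inv_close:
  assumes inv: "adversary_inv n t k X E Z C L"
  obtains E' C' where "adversary_inv n t k (X - {x}) E' Z C' L" "E \<subseteq> E'"
proof (cases "x \<notin> C \<and> t < card (neighbours Z x - C)")
  case False
  then have "adversary_inv n t k (X - {x}) E Z C L"
    using inv unfolding adversary_inv_def by (auto split: if_splits)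
  then show ?thesis
    using that by blast
next
  case True
  \<comment> \<open>the more than t absent pairs at x pay for closing x in the count of touching pairs\<close>
  define E' where "E' = E \<union> {e \<in> cycle_edges L. x \<in> e}"
  define C' where "C' = insert x C"
  have fin: "finite Z" "finite C" and dist: "distinct L"
    using inv by (simp_all add: adversary_inv_def)
  have "card E' \<le> card E + card {e \<in> cycle_edges L. x \<in> e}"
    unfolding E'_def by (rule card_Un_le)
  also have "\<dots> \<le> 2 * card C'"
    using inv card_incident_cycle_edges[OF dist, of x] True fin(2)
    by (simp add: adversary_inv_def C'_def)
  finally have card_E': "card E' \<le> 2 * card C'" .
  have "card {e \<in> Z. e \<inter> C \<noteq> {}} + card (neighbours Z x - C) \<le> card {e \<in> Z. e \<inter> C' \<noteq> {}}"
    unfolding C'_def using card_touching_insert[OF fin(1)] True by blast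
  then have touched: "(t + 1) * card C' \<le> card {e \<in> Z. e \<inter> C' \<noteq> {}}"
    using inv True fin(2) by (simp add: adversary_inv_def C'_def)
  have "card (neighbours Z y - C') \<le> (if y \<in> X - {x} then t + 1 else t)" if "y \<notin> C'" for y
  proof -
    have "card (neighbours Z y - C') \<le> card (neighbours Z y - C)"
      using finite_neighbours[OF fin(1)] by (intro card_mono) (auto simp: C'_def)
    moreover have "y \<notin> C" "y \<noteq> x"
      using that by (auto simp: C'_def)
    ultimately show ?thesis
      using inv by (auto simp: adversary_inv_def)
  qed
  then have "adversary_inv n t k (X - {x}) E' Z C' L"
    using inv card_E' touched fin(2) unfolding adversary_inv_def
    by (auto simp: E'_def C'_def incident_edges_in_def)
  then show ?thesis
    using that E'_def by blast
qed

lemma adversary_inv_add_absent: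
  assumes inv: "adversary_inv n t k {} E Z C L" and "{i, j} \<notin> E"
    and num: "card E + 2 * t + 2 * card C + 3 < n"
  obtains L' where "adversary_inv n t (Suc k) {i, j} E (insert {i, j} Z) C L'"
proof -
  let ?Z = "insert {i, j} Z"
  have L: "distinct L" "set L = {1..n}" "E \<subseteq> cycle_edges L" "Z \<inter> cycle_edges L = {}"
      "incident_edges_in C E L"
    and fin: "finite Z" "finite C"
    using inv by (simp_all add: adversary_inv_def)
  have "length L = n"
    using L(1,2) distinct_card by fastforce
  then have big: "card E + 2 * (t + 1 + card C) + 1 < length L" "3 \<le> length L"
    using num by simp_all
  have fin_E: "finite E"
    using L(3) finite_cycle_edges finite_subset by blast
  have deg: "card (neighbours ?Z x - C) \<le> (if x \<in> {i, j} then t + 1 else t)" if "x \<notin> C" for x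
  proof -
    have "card (neighbours ?Z x - C) \<le> card (neighbours Z x - C) + (if x \<in> {i, j} then 1 else 0)"
      using finite_neighbours[OF fin(1)]
      by (auto simp: neighbours_insert insert_Diff_if card_insert_if)
    then show ?thesis
      using inv that by (auto simp: adversary_inv_def split: if_splits)
  qed
  have deg': "card (neighbours ?Z x) \<le> t + 1 + card C" if "x \<notin> C" for x
    using card_neighbours_le[OF fin(2), of ?Z x] deg[OF that] by (auto split: if_splits)
  have disj: "E \<inter> ?Z = {}"
    using L(3,4) assms(2) by auto
  obtain L' where L': "distinct L'" "set L' = set L" "E \<subseteq> cycle_edges L'"
      "incident_edges_in C E L'" "?Z \<inter> cycle_edges L' = {}"
    using reroute_cycle[OF L(1) big(2) L(3) disj L(5) fin_E _ deg' big(1)] fin(1) by auto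
  have "card {e \<in> Z. e \<inter> C \<noteq> {}} \<le> card {e \<in> ?Z. e \<inter> C \<noteq> {}}"
    using fin(1) by (intro card_mono) auto
  moreover have "card ?Z \<le> Suc k"
    using inv fin(1) by (simp add: adversary_inv_def card_insert_if)
  ultimately have "adversary_inv n t (Suc k) {i, j} E ?Z C L'"
    using inv L L' fin deg unfolding adversary_inv_def by auto
  then show ?thesis
    by (rule that)
qed

lemma adversary_answer:
  assumes inv: "adversary_inv n t k {} E Z C L" and ij: "(i, j) \<in> Pairs n"
    and num: "card E + 2 * t + 2 * card C + 3 < n"
  shows "\<exists>b E' Z' C' L'. adversary_inv n t (Suc k) {} E' Z' C' L'
    \<and> consistent n E' Z' \<subseteq> {x \<in> consistent n E Z. x (i, j) = b}"
proof (cases "{i, j} \<in> E")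
  case True
  have "adversary_inv n t (Suc k) {} E Z C L"
    using inv by (auto simp: adversary_inv_def)
  moreover have "consistent n E Z \<subseteq> {x \<in> consistent n E Z. x (i, j) = True}"
    using True ij by (auto simp: consistent_def)
  ultimately show ?thesis
    by blast
next
  case False
  obtain L' where "adversary_inv n t (Suc k) {i, j} E (insert {i, j} Z) C L'"
    using adversary_inv_add_absent[OF inv False num] .
  then obtain E1 C1 where "adversary_inv n t (Suc k) ({i, j} - {i}) E1 (insert {i, j} Z) C1 L'" "E \<subseteq> E1"
    by (rule adversary_inv_close)
  then obtain E2 C2 where "adversary_inv n t (Suc k) ({i, j} - {i} - {j}) E2 (insert {i, j} Z) C2 L'"
      "E \<subseteq> E2"
    by (metis adversary_inv_close subset_trans)
  moreover have "{i, j} - {i} - {j} = {}"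
    by auto
  ultimately have "adversary_inv n t (Suc k) {} E2 (insert {i, j} Z) C2 L'"
    by (simp only:)
  moreover have "consistent n E2 (insert {i, j} Z) \<subseteq> {x \<in> consistent n E Z. x (i, j) = False}"
    using \<open>E \<subseteq> E2\<close> ij by (auto simp: consistent_def)
  ultimately show ?thesis
    by blast
qed

lemma adversary_undecided:
  assumes inv: "adversary_inv n t k {} E Z C L" and "even n" "6 \<le> n"
    and num: "2 * card E < n div 2" "card E + 2 * t + 2 * card C + 1 < n div 2"
  shows "\<exists>x \<in> consistent n E Z. \<exists>y \<in> consistent n E Z.
    x \<in> Delta_1v2 n \<and> y \<in> Delta_1v2 n \<and> one_cycle n x \<and> \<not> one_cycle n y"
proof -
  obtain h where n_eq: "n = 2 * h"
    using assms(2) by (rule evenE)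
  then have h: "3 \<le> h" "2 * card E < h" "card E + 2 * t + 2 * card C + 1 < h"
    using assms(3) num by simp_all
  have L: "distinct L" "set L = {1..n}" "E \<subseteq> cycle_edges L" "Z \<inter> cycle_edges L = {}"
      "incident_edges_in C E L"
    and fin: "finite Z" "finite C"
    using inv by (simp_all add: adversary_inv_def)
  have "length L = n"
    using L(1,2) distinct_card by fastforce
  define x where "x = graph_input n (cycle_edges L)"
  have "x \<in> consistent n E Z"
    unfolding x_def using L(3,4) by (rule graph_input_consistent)
  moreover have "one_cycle n x"
    unfolding x_def using L(1,2) assms(3) by (intro one_cycle_graph_input) simp_all
  ultimately have x: "x \<in> consistent n E Z" "one_cycle n x" "x \<in> Delta_1v2 n"
    by (simp_all add: x_def Delta_1v2_def graph_input_in_Inputs)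
  have "card (neighbours Z v) \<le> t + card C" if "v \<notin> C" for v
    using card_neighbours_le[OF fin(2), of Z v] inv that by (auto simp: adversary_inv_def)
  moreover have "card E + 2 * (t + card C) + 1 < h"
    using h(3) by (simp add: algebra_simps)
  ultimately obtain P Q where PQ: "length P = h" "length Q = h" "distinct (P @ Q)" "set (P @ Q) = {1..n}"
      "E \<subseteq> cycle_edges P \<union> cycle_edges Q" "Z \<inter> (cycle_edges P \<union> cycle_edges Q) = {}"
    using split_cycle_avoiding[OF L(1) _ h(1) L(3,4,5) fin(1) _ h(2)] \<open>length L = n\<close> n_eq L(2)
    by metis
  define y where "y = graph_input n (cycle_edges P \<union> cycle_edges Q)"
  have "y \<in> consistent n E Z"
    unfolding y_def using PQ(5,6) by (rule graph_input_consistent)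
  moreover have "two_cycles n y"
    unfolding y_def using PQ n_eq h(1) by (intro two_cycles_graph_input) simp_all
  then have "y \<in> Delta_1v2 n"
    by (simp add: Delta_1v2_def y_def graph_input_in_Inputs)
  moreover have "P \<noteq> []" "Q \<noteq> []" "2 \<le> length P" "2 \<le> length Q"
    using PQ(1,2) h(1) by auto
  then have "\<not> one_cycle n y"
    unfolding y_def using PQ(3,4) by (intro not_one_cycle_graph_input)
  ultimately show ?thesis
    using x by blast
qed

lemma adversary_budget:
  fixes n t c e K :: nat
  assumes "(t + 1) * c \<le> K" "512 * K \<le> n\<^sup>2" "t = n div 16" "e \<le> 2 * c" "6 \<le> n" "even n"
  shows "e + 2 * t + 2 * c + 3 < n" "2 * e < n div 2" "e + 2 * t + 2 * c + 1 < n div 2"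
proof -
  have t: "n + 1 \<le> 16 * (t + 1)" "16 * t \<le> n"
    using assms(3) by simp_all
  have "32 * c \<le> n"
  proof (rule ccontr)
    assume "\<not> 32 * c \<le> n"
    then have "(n + 1) * (n + 1) \<le> (32 * c) * (16 * (t + 1))"
      using t(1) by (intro mult_le_mono) simp_all
    also have "\<dots> = 512 * ((t + 1) * c)"
      by (simp add: algebra_simps)
    also have "\<dots> \<le> n\<^sup>2"
      using assms(1,2) by simp
    finally show False
      by (simp add: power2_eq_square)
  qed
  moreover have "n = 2 * (n div 2)"
    using assms(6) by simp
  ultimately show "e + 2 * t + 2 * c + 3 < n" "2 * e < n div 2" "e + 2 * t + 2 * c + 1 < n div 2"
    using assms(4,5) t(2) by linarith+
qed

lemma shallow_dtree_confuses_cycles: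
  assumes "even n" "6 \<le> n" "dt_vars T \<subseteq> Pairs n" "512 * dt_depth T \<le> n\<^sup>2"
  shows "\<exists>x \<in> Delta_1v2 n. \<exists>y \<in> Delta_1v2 n. one_cycle n x \<and> \<not> one_cycle n y \<and> dt_eval T x = dt_eval T y"
proof -
  let ?t = "n div 16" and ?K = "dt_depth T"
  let ?I = "\<lambda>k (E, Z, C, L). adversary_inv n ?t k {} E Z C L"
  let ?S = "\<lambda>(E, Z, C, L). consistent n E Z"
  let ?R = "\<lambda>x y. x \<in> Delta_1v2 n \<and> y \<in> Delta_1v2 n \<and> one_cycle n x \<and> \<not> one_cycle n y"
  have budget: "card E + 2 * ?t + 2 * card C + 3 < n" "2 * card E < n div 2"
      "card E + 2 * ?t + 2 * card C + 1 < n div 2"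
    if "adversary_inv n ?t k {} E Z C L" "k \<le> ?K" for k E Z C L
    using adversary_budget[of ?t "card C" ?K n "card E"] adversary_inv_card_closed[OF that(1)] that
      assms(1,2,4) by (auto simp: adversary_inv_def)
  let ?s0 = "({}, {}, {} :: nat set, [1..<Suc n])"
  have "\<exists>x \<in> ?S ?s0. \<exists>y \<in> ?S ?s0. ?R x y \<and> dt_eval T x = dt_eval T y"
  proof (rule dt_eval_adversary[where I = ?I and K = ?K and k = 0])
    fix k s v
    assume I: "?I k s" "k < ?K" "v \<in> Pairs n"
    obtain E Z C L where s: "s = (E, Z, C, L)"
      by (cases s rule: prod_cases4)
    obtain i j where v: "v = (i, j)"
      by fastforce
    have inv: "adversary_inv n ?t k {} E Z C L"
      using I(1) s by simp
    obtain b E' Z' C' L' where "adversary_inv n ?t (Suc k) {} E' Z' C' L'"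
        "consistent n E' Z' \<subseteq> {x \<in> consistent n E Z. x (i, j) = b}"
      using adversary_answer[OF inv _ budget(1)[OF inv]] I(2,3) v by fastforce
    then show "\<exists>b s'. ?I (Suc k) s' \<and> ?S s' \<subseteq> {x \<in> ?S s. x v = b}"
      using s v by (intro exI[of _ b] exI[of _ "(E', Z', C', L')"]) simp
  next
    fix k s
    assume I: "?I k s" "k \<le> ?K"
    obtain E Z C L where s: "s = (E, Z, C, L)"
      by (cases s rule: prod_cases4)
    have inv: "adversary_inv n ?t k {} E Z C L"
      using I(1) s by simp
    show "\<exists>x \<in> ?S s. \<exists>y \<in> ?S s. ?R x y"
      using adversary_undecided[OF inv assms(1,2) budget(2,3)[OF inv I(2)]] s by simp
  next
    show "?I 0 ?s0"
      by (auto simp: adversary_inv_def incident_edges_in_def neighbours_def)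
  qed (use assms(3) in simp_all)
  then show ?thesis
    by auto
qed

theorem corollary4p6:
  fixes n :: nat
  assumes "even n" and "n \<ge> 6"
  shows "real (D_partial n (Delta_1v2 n) (one_v_two_cycle n)) \<ge> real n ^ 2 / 512"
proof -
  have "n\<^sup>2 div 512 < D_partial n (Delta_1v2 n) (one_v_two_cycle n)"
  proof (rule D_partial_lower_bound)
    fix T
    assume "dt_vars T \<subseteq> Pairs n" "dt_depth T \<le> n\<^sup>2 div 512"
    moreover have "512 * (n\<^sup>2 div 512) \<le> n\<^sup>2"
      by simp
    ultimately show "\<exists>x \<in> Delta_1v2 n. \<exists>y \<in> Delta_1v2 n. one_v_two_cycle n x \<noteq> one_v_two_cycle n y
        \<and> dt_eval T x = dt_eval T y"
      using shallow_dtree_confuses_cycles[OF assms, of T] by (fastforce simp: one_v_two_cycle_def)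
  qed (auto simp: Delta_1v2_def)
  then have "n\<^sup>2 < 512 * D_partial n (Delta_1v2 n) (one_v_two_cycle n)"
    by linarith
  then have "real (n\<^sup>2) < real (512 * D_partial n (Delta_1v2 n) (one_v_two_cycle n))"
    by (simp only: of_nat_less_iff)
  then show ?thesis
    by simp
qed

end
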